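(* Let $G(t)\in\mathbb{Z}[t]$ with $\deg G=N$, and suppose $G(t)$ is a product of distinct non-constant polynomials, each irreducible over $\mathbb{Z}$ and of degree at most $3$. If $G(t)$ has a local obstruction at the prime $\ell$, then $\ell\le (N_\ell+2)/2$, where $N_\ell$ is the number of (not necessarily distinct) non-constant linear factors in the factorization of $G(t)$ modulo $\ell$ in $\mathbb{F}_\ell[t]$.
   Context: For $G(t)\in\mathbb{Z}[t]$ and a prime $\ell$, $G$ is said to have a local obstruction at $\ell$ if $G(z)\equiv 0\pmod{\ell^2}$ for every $z\in(\mathbb{Z}/\ell^2\mathbb{Z})^*$. *)

theory Defs
  imports "HOL-Computational_Algebra.Computational_Algebra" "Berlekamp_Zassenhaus.Finite_Field"
begin

text \<open>Local obstruction at l: G(z) is divisible by l^2 for every z that is a unit mod l^2,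
  i.e. every integer z coprime to l.\<close>
definition local_obstruction :: "int poly \<Rightarrow> nat \<Rightarrow> bool" where
  "local_obstruction G l \<longleftrightarrow> (\<forall>z::int. coprime z (int l) \<longrightarrow> (int l)^2 dvd poly G z)"

definition num_linear_factors_mod :: "'p::prime_card itself \<Rightarrow> int poly \<Rightarrow> nat" where
  "num_linear_factors_mod _ G =
     size (filter_mset (\<lambda>f. degree f = 1)
       (prime_factorization (map_poly (of_int :: int \<Rightarrow> 'p mod_ring) G)))"

end

theory Submission
  imports Defs
begin

text \<open>
  For an integer \<open>u\<close> prime to \<open>\<ell>\<close>, both \<open>G(u)\<close> and \<open>G(u + \<ell>) \<equiv> G(u) + \<ell> G'(u)\<close> vanish
  modulo \<open>\<ell>\<^sup>2\<close>, so \<open>\<ell>\<close> divides \<open>G(u)\<close> and \<open>G'(u)\<close>: every nonzero residue is a double root of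
  the reduction of \<open>G\<close> modulo \<open>\<ell>\<close>. That reduction is nonzero because \<open>G\<close>, a product of
  non-constant irreducible polynomials, is primitive. Hence it has at least \<open>2(\<ell> - 1)\<close> linear
  prime factors.
\<close>

lemma of_int_mod_ring_eq_0_iff:
  "(of_int x :: 'p::prime_card mod_ring) = 0 \<longleftrightarrow> int CARD('p) dvd x"
  by transfer (simp add: mod_eq_0_iff_dvd)

lemma content_prod_list_nonconst_irreducible:
  fixes fs :: "'a::{factorial_semiring, semiring_Gcd, ring_gcd, idom_divide,
    semiring_gcd_mult_normalize} poly list"
  assumes "\<forall>f \<in> set fs. degree f \<noteq> 0 \<and> irreducible f"
  shows "content (prod_list fs) = 1"
  using assms
proof (induction fs)
  case (Cons f fs)
  then have "content f = 1"
    using nonconst_poly_irreducible_iff[of f] by simp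
  with Cons show ?case
    by (simp add: content_prod_eq_1_iff)
qed simp

lemma of_int_poly_neq_0_if_content_eq_1:
  assumes "content G = 1"
  shows "(of_int_poly G :: 'p::prime_card mod_ring poly) \<noteq> 0"
proof
  assume "(of_int_poly G :: 'p mod_ring poly) = 0"
  then have "\<forall>n. int CARD('p) dvd Polynomial.coeff G n"
    by (metis coeff_0 coeff_map_poly of_int_0 of_int_mod_ring_eq_0_iff)
  then have "int CARD('p) dvd content G"
    by (simp flip: const_poly_dvd_iff const_poly_dvd_iff_dvd_content)
  with assms show False
    using prime_card_int[where 'a='p] by (simp add: not_prime_unit)
qed

lemma synthetic_div_twice:
  fixes p :: "'a::comm_ring_1 poly"
  shows "p = [:-c, 1:]^2 * synthetic_div (synthetic_div p c) c
             + [:-c, 1:] * [:poly (synthetic_div p c) c:] + [:poly p c:]"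
proof -
  have "p = [:-c, 1:] * synthetic_div p c + [:poly p c:]"
    using synthetic_div_correct'[of c p] by simp
  also have "synthetic_div p c = [:-c, 1:] * synthetic_div (synthetic_div p c) c
                                 + [:poly (synthetic_div p c) c:]"
    using synthetic_div_correct'[of c "synthetic_div p c"] by simp
  finally show ?thesis
    by (simp only: power2_eq_square distrib_left mult.assoc)
qed

lemma square_linear_dvd_of_int_poly:
  fixes G :: "int poly" and u :: int
  defines "L \<equiv> int CARD('p::prime_card)"
  assumes "L^2 dvd poly G u" and "L^2 dvd poly G (u + L)"
  shows "[:- of_int u, 1:]^2 dvd (of_int_poly G :: 'p mod_ring poly)"
proof -
  define Q where "Q = synthetic_div G u"
  define R where "R = synthetic_div Q u"
  have G_eq: "G = [:-u, 1:]^2 * R + [:-u, 1:] * [:poly Q u:] + [:poly G u:]"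
    unfolding Q_def R_def by (rule synthetic_div_twice)
  have "poly G (u + L) = L^2 * poly R (u + L) + L * poly Q u + poly G u"
    by (subst G_eq) (simp add: algebra_simps)
  with assms have "L^2 dvd L * poly Q u"
    by (metis add_diff_cancel_right' dvd_add_right_iff dvd_diff dvd_triv_left)
  then have "L dvd poly Q u"
    unfolding L_def by (simp add: power2_eq_square)
  moreover have "L dvd poly G u"
    using assms(2) by (simp add: power2_eq_square dvd_mult_left)
  ultimately have "(of_int_poly [:poly Q u:] :: 'p mod_ring poly) = 0"
    and "(of_int_poly [:poly G u:] :: 'p mod_ring poly) = 0"
    by (simp_all add: L_def of_int_hom.map_poly_pCons_hom of_int_mod_ring_eq_0_iff)
  moreover have "(of_int_poly [:-u, 1:] :: 'p mod_ring poly) = [:- of_int u, 1:]"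
    by simp
  ultimately have "(of_int_poly G :: 'p mod_ring poly) = [:- of_int u, 1:]^2 * of_int_poly R"
    by (subst G_eq) (simp only: hom_distribs mult_zero_right add_0_right)
  then show ?thesis by simp
qed

lemma local_obstruction_imp_square_linear_dvd:
  assumes "local_obstruction G CARD('p::prime_card)" and "a \<noteq> 0"
  shows "[:-a, 1:]^2 dvd (of_int_poly G :: 'p mod_ring poly)"
proof -
  define u where "u = to_int_mod_ring a"
  have a_eq: "a = of_int u"
    by (simp add: u_def of_int_of_int_mod_ring)
  with assms(2) have "\<not> int CARD('p) dvd u"
    by (simp add: of_int_mod_ring_eq_0_iff)
  then have "coprime u (int CARD('p))"
    using prime_imp_coprime[OF prime_card_int[where 'a='p]] by (simp add: ac_simps)
  then have "(int CARD('p))^2 dvd poly G u" and "(int CARD('p))^2 dvd poly G (u + int CARD('p))"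
    using assms(1) by (simp_all add: local_obstruction_def coprime_iff_gcd_eq_1)
  then show ?thesis
    unfolding a_eq by (rule square_linear_dvd_of_int_poly)
qed

lemma card_le_linear_prime_factors:
  fixes f :: "'a::field_gcd poly"
  assumes "f \<noteq> 0" and "finite S" and "\<forall>a \<in> S. [:-a, 1:]^2 dvd f"
  shows "2 * card S \<le> size (filter_mset (\<lambda>g. degree g = 1) (prime_factorization f))"
proof -
  define D where "D = filter_mset (\<lambda>g. degree g = 1) (prime_factorization f)"
  have count_D: "2 \<le> count D [:-a, 1:]" if "a \<in> S" for a
  proof -
    have "prime [:-a, 1:]"
      using prime_elem_linear_field_poly[of 1 "-a"]
      by (simp add: prime_def normalize_poly_def flip: one_pCons)
    then have "count D [:-a, 1:] = multiplicity [:-a, 1:] f"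
      by (simp add: D_def count_prime_factorization_prime)
    then show ?thesis
      using assms that by (simp add: multiplicity_geI)
  qed
  then have "2 * card S \<le> (\<Sum>a \<in> S. count D [:-a, 1:])"
    using sum_bounded_below[of S 2 "\<lambda>a. count D [:-a, 1:]"] by (simp add: mult.commute)
  also have "\<dots> = (\<Sum>g \<in> (\<lambda>a. [:-a, 1:]) ` S. count D g)"
    by (simp add: sum.reindex inj_on_def)
  also have "\<dots> \<le> size D"
    unfolding size_multiset_overloaded_eq
    by (rule sum_mono2) (use count_D in \<open>fastforce simp flip: count_greater_zero_iff\<close>)+
  finally show ?thesis
    unfolding D_def .
qed

theorem mainTheorem2:
  fixes G :: "int poly" and l :: nat
  assumes "prime l"
    and "CARD('p::prime_card) = l"
    and "\<exists>fs :: int poly list. distinct fs \<and> G = prod_list fs \<and>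
           (\<forall>f \<in> set fs. degree f \<ge> 1 \<and> degree f \<le> 3 \<and> irreducible f)"
    and "local_obstruction G l"
  shows "real l \<le> (real (num_linear_factors_mod TYPE('p) G) + 2) / 2"
proof -
  obtain fs where G_eq: "G = prod_list fs"
    and fs: "\<forall>f \<in> set fs. degree f \<ge> 1 \<and> irreducible f"
    using assms(3) by blast
  have "content G = 1"
    unfolding G_eq using fs by (intro content_prod_list_nonconst_irreducible) auto
  then have "(of_int_poly G :: 'p mod_ring poly) \<noteq> 0"
    by (rule of_int_poly_neq_0_if_content_eq_1)
  moreover have "\<forall>a \<in> UNIV - {0}. [:-a, 1:]^2 dvd (of_int_poly G :: 'p mod_ring poly)"
    using local_obstruction_imp_square_linear_dvd assms(2,4) by blast
  ultimately have "2 * card (UNIV - {0 :: 'p mod_ring}) \<le> num_linear_factors_mod TYPE('p) G"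
    unfolding num_linear_factors_mod_def by (intro card_le_linear_prime_factors) simp_all
  moreover have "card (UNIV - {0 :: 'p mod_ring}) = l - 1"
    using assms(2) by (simp add: card_Diff_singleton)
  moreover have "l \<ge> 1"
    using assms(1) prime_ge_1_nat by blast
  ultimately have "2 * l \<le> num_linear_factors_mod TYPE('p) G + 2"
    by linarith
  then have "2 * real l \<le> real (num_linear_factors_mod TYPE('p) G) + 2"
    by (metis of_nat_add of_nat_le_iff of_nat_mult of_nat_numeral)
  then show ?thesis
    by simp
qed

end
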